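(* Let $S^{\max}$, $L$ and $\mathcal{I}$ be as in the context. For all $\sigma,\sigma'\in\mathbb{T}$ with $\sigma\preceq\sigma'$, we have $\mathcal{I}(\sigma)\supseteq\mathcal{I}(\sigma')$.
   Context: Let $E$ be a set of events. A trace is a finite sequence $\sigma=\sigma_0\cdots\sigma_{n-1}$ ($n\ge 0$) or an infinite sequence $\sigma_0\sigma_1\cdots$ of events; $|\sigma|$ is its length ($\infty$ if infinite) and $\mathbb{T}$ is the set of all traces (including the empty trace). Write $\sigma\preceq\sigma'$ iff $|\sigma|\le|\sigma'|$ and $\sigma_i=\sigma'_i$ for all $0\le i<|\sigma|$ (prefix order). For $P\subseteq\mathbb{T}$, $\mathrm{pf}(P)=\{\sigma'\in\mathbb{T}\mid\exists\sigma\in P.\ \sigma'\preceq\sigma\}$. Fix $S^{\max}\subseteq\mathbb{T}$ and let $S^{\mathrm{pf}}=\mathrm{pf}(S^{\max})$ (valid traces). For $P\subseteq\mathbb{T}$, $\alpha(P)=\{\sigma\in\mathrm{pf}(P)\mid\forall\sigma'\in S^{\max}.\ \sigma\preceq\sigma'\Rightarrow\sigma'\in P\}$. Let $L\subseteq\wp(S^{\max})$ with $S^{\max},\emptyset\in L$ be such that $(L,\subseteq)$ is a complete lattice with top $S^{\max}$, bottom $\emptyset$, join $\sqcup$ and meet $\sqcap$ (least upper bounds / greatest lower bounds in $L$ w.r.t. $\subseteq$, not necessarily $\cup,\cap$). The inquiry function is $\mathcal{I}(\sigma)=\sqcap\{P\in L\mid \sigma\in\alpha(P)\}$ for $\sigma\in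 S^{\mathrm{pf}}$, and $\mathcal{I}(\sigma)=\emptyset$ for $\sigma\notin S^{\mathrm{pf}}$. *)

theory Defs
  imports Main "HOL-Library.Extended_Nat"
begin

datatype 'e trace = Fin "'e list" | Inf "nat \<Rightarrow> 'e"

fun tlen :: "'e trace \<Rightarrow> enat" where
  "tlen (Fin xs) = enat (length xs)"
| "tlen (Inf f) = \<infinity>"

fun tnth :: "'e trace \<Rightarrow> nat \<Rightarrow> 'e" where
  "tnth (Fin xs) i = xs ! i"
| "tnth (Inf f) i = f i"

definition tprefix :: "'e trace \<Rightarrow> 'e trace \<Rightarrow> bool" where
  "tprefix s s' \<longleftrightarrow> tlen s \<le> tlen s' \<and> (\<forall>i. enat i < tlen s \<longrightarrow> tnth s i = tnth s' i)"

definition pf :: "'e trace set \<Rightarrow> 'e trace set" where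
  "pf P = {s'. \<exists>s\<in>P. tprefix s' s}"

definition alpha :: "'e trace set \<Rightarrow> 'e trace set \<Rightarrow> 'e trace set" where
  "alpha Smax P = {s \<in> pf P. \<forall>s'\<in>Smax. tprefix s s' \<longrightarrow> s' \<in> P}"

definition is_glb_in :: "'a set set \<Rightarrow> 'a set set \<Rightarrow> 'a set \<Rightarrow> bool" where
  "is_glb_in L Q x \<longleftrightarrow> x \<in> L \<and> (\<forall>q\<in>Q. x \<subseteq> q) \<and> (\<forall>y\<in>L. (\<forall>q\<in>Q. y \<subseteq> q) \<longrightarrow> y \<subseteq> x)"

definition is_lub_in :: "'a set set \<Rightarrow> 'a set set \<Rightarrow> 'a set \<Rightarrow> bool" where
  "is_lub_in L Q x \<longleftrightarrow> x \<in> L \<and> (\<forall>q\<in>Q. q \<subseteq> x) \<and> (\<forall>y\<in>L. (\<forall>q\<in>Q. q \<subseteq> y) \<longrightarrow> x \<subseteq> y)"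

definition meet_in :: "'a set set \<Rightarrow> 'a set set \<Rightarrow> 'a set" where
  "meet_in L Q = (THE x. is_glb_in L Q x)"

definition trace_lattice :: "'e trace set \<Rightarrow> 'e trace set set \<Rightarrow> bool" where
  "trace_lattice Smax L \<longleftrightarrow> L \<subseteq> Pow Smax \<and> Smax \<in> L \<and> {} \<in> L
     \<and> (\<forall>Q\<subseteq>L. \<exists>x. is_glb_in L Q x) \<and> (\<forall>Q\<subseteq>L. \<exists>x. is_lub_in L Q x)"

definition inquiry :: "'e trace set \<Rightarrow> 'e trace set set \<Rightarrow> 'e trace \<Rightarrow> 'e trace set" where
  "inquiry Smax L s = (if s \<in> pf Smax then meet_in L {P \<in> L. s \<in> alpha Smax P} else {})"

end

theory Submission
  imports Defs
begin

text \<open>Extending a valid trace only enlarges the family of properties P with the trace in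
  \<open>alpha Smax P\<close>: every maximal extension of the longer trace extends the shorter one and so lies
  in P. Meets in L are antitone in the family, hence the inquiry shrinks.\<close>

lemma tprefix_trans:
  assumes "tprefix a b" and "tprefix b c"
  shows "tprefix a c"
proof -
  have "tnth a i = tnth c i" if "enat i < tlen a" for i
  proof -
    have "enat i < tlen b"
      using that assms(1) unfolding tprefix_def by (meson order_less_le_trans)
    then show ?thesis
      using that assms unfolding tprefix_def by simp
  qed
  moreover have "tlen a \<le> tlen c"
    using assms unfolding tprefix_def by (meson order_trans)
  ultimately show ?thesis
    unfolding tprefix_def by blast
qed

lemma pf_prefix_closed: "tprefix s s' \<Longrightarrow> s' \<in> pf P \<Longrightarrow> s \<in> pf P"
  unfolding pf_def by (blast intro: tprefix_trans)

lemma alpha_prefix_mono: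
  assumes "tprefix s s'" and "s' \<in> pf Smax" and "s \<in> alpha Smax P"
  shows "s' \<in> alpha Smax P"
proof -
  have extensions_in_P: "u \<in> P" if "u \<in> Smax" "tprefix s u" for u
    using assms(3) that unfolding alpha_def by blast
  obtain t where "t \<in> Smax" "tprefix s' t"
    using assms(2) unfolding pf_def by blast
  then have "s' \<in> pf P"
    unfolding pf_def by (blast intro: extensions_in_P tprefix_trans[OF assms(1)])
  then show ?thesis
    unfolding alpha_def by (blast intro: extensions_in_P tprefix_trans[OF assms(1)])
qed

lemma is_glb_in_unique: "is_glb_in L Q x \<Longrightarrow> is_glb_in L Q y \<Longrightarrow> x = y"
  unfolding is_glb_in_def by (simp add: subset_antisym)

lemma meet_in_is_glb: "is_glb_in L Q x \<Longrightarrow> is_glb_in L Q (meet_in L Q)"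
  unfolding meet_in_def by (rule theI) (assumption, rule is_glb_in_unique)

lemma meet_in_antimono:
  assumes "is_glb_in L Q x" and "is_glb_in L Q' x'" and "Q \<subseteq> Q'"
  shows "meet_in L Q' \<subseteq> meet_in L Q"
proof -
  have "meet_in L Q' \<in> L" and "\<forall>q\<in>Q. meet_in L Q' \<subseteq> q"
    using meet_in_is_glb[OF assms(2)] assms(3) unfolding is_glb_in_def by auto
  then show ?thesis
    using meet_in_is_glb[OF assms(1)] unfolding is_glb_in_def by blast
qed

theorem lemma2:
  fixes Smax :: "'e trace set" and L :: "'e trace set set" and s s' :: "'e trace"
  assumes "trace_lattice Smax L"
    and "tprefix s s'"
  shows "inquiry Smax L s' \<subseteq> inquiry Smax L s"
proof (cases "s' \<in> pf Smax")
  case False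
  then show ?thesis by (simp add: inquiry_def)
next
  case True
  define Q where "Q = {P \<in> L. s \<in> alpha Smax P}"
  define Q' where "Q' = {P \<in> L. s' \<in> alpha Smax P}"
  have glb_exists: "\<exists>x. is_glb_in L R x" if "R \<subseteq> L" for R
    using assms(1) that unfolding trace_lattice_def by blast
  obtain x x' where "is_glb_in L Q x" "is_glb_in L Q' x'"
    using glb_exists[of Q] glb_exists[of Q'] unfolding Q_def Q'_def by blast
  moreover have "Q \<subseteq> Q'"
    unfolding Q_def Q'_def using alpha_prefix_mono[OF assms(2) True] by blast
  ultimately have "meet_in L Q' \<subseteq> meet_in L Q"
    by (rule meet_in_antimono)
  moreover have "s \<in> pf Smax"
    using assms(2) True by (rule pf_prefix_closed)
  ultimately show ?thesis
    using True unfolding inquiry_def Q_def Q'_def by simp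
qed

end
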